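(* Let $\mathcal{E}$ be a unital qubit channel with Stokes matrix $R$. Let $O_B^*\in SO(3)$ be a rotation matrix whose first row is a scalar multiple of $(R_{zz},R_{xz},R_{yz})$ (the other two rows arbitrary as long as $O_B^*$ is a rotation matrix), let $\mathcal{U}_B^*$ be the corresponding unitary channel and $\mathcal{E}^*=\mathcal{U}_B^*\circ\mathcal{E}$. Then $$F_1(\mathcal{E})=H_{\mathcal{E}^*}(X|E)-H_{\mathcal{E}^*}(X|Y)=F_2(\mathcal{E}),$$ where $F_1(\mathcal{E})=\max_{\mathcal{U}_B}[H_{\mathcal{U}_B\circ\mathcal{E}}(X|E)-H_{\mathcal{U}_B\circ\mathcal{E}}(X|Y)]$ and $F_2(\mathcal{E})=\max_{\mathcal{U}_A,\mathcal{U}_B}[H_{\mathcal{U}_B\circ\mathcal{E}\circ\mathcal{U}_A}(X|E)-H_{\mathcal{U}_B\circ\mathcal{E}\circ\mathcal{U}_A}(X|Y)]$, maxima over unitary qubit channels.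
   Context: A qubit channel $\mathcal{E}$ is described by its Stokes parameterization $(R,t)$: in Bloch coordinates $(\theta_z,\theta_x,\theta_y)$, $\theta_a=\mathrm{Tr}(\rho\sigma_a)$, it acts as $\theta\mapsto R\theta+t$ ($R$ real $3\times3$, indices ordered $z,x,y$). Unital means $t=0$. A unitary channel acts on Bloch vectors as a rotation $O\in SO(3)$ (every rotation arises); thus $\mathcal{U}_B\circ\mathcal{E}\circ\mathcal{U}_A$ has Stokes matrix $O_BRO_A$. $\mathcal{E}_E$ is the complementary channel to the environment. With $|0_z\rangle,|1_z\rangle$ the $\pm1$ eigenvectors of $\sigma_z$: $H_{\mathcal{E}}(X|E)=H(\rho_{XE})-H(\rho_E)$ (von Neumann entropy, base 2) for $\rho_{XE}=\sum_{x}\frac12|x_z\rangle\langle x_z|\otimes\mathcal{E}_E(|x_z\rangle\langle x_z|)$, and $H_{\mathcal{E}}(X|Y)$ is the conditional Shannon entropy for $P_{XY}(x,y)=\frac12\langle y_z|\mathcal{E}(|x_z\rangle\langle x_z|)|y_z\rangle$. *)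

theory Defs
  imports "Jordan_Normal_Form.Jordan_Normal_Form" "Jordan_Normal_Form.Schur_Decomposition"
begin

definition msum2 :: "(complex mat \<Rightarrow> complex mat) \<Rightarrow> complex mat list \<Rightarrow> complex mat" where
  "msum2 f Ks = foldr (\<lambda>K acc. f K + acc) Ks (0\<^sub>m 2 2)"

definition mtrace :: "complex mat \<Rightarrow> complex" where
  "mtrace A = (\<Sum>i<dim_row A. A $$ (i, i))"

definition qubit_channel :: "complex mat list \<Rightarrow> bool" where
  "qubit_channel Ks \<longleftrightarrow> (\<forall>K\<in>set Ks. K \<in> carrier_mat 2 2) \<and>
     msum2 (\<lambda>K. mat_adjoint K * K) Ks = 1\<^sub>m 2"

definition apply_channel :: "complex mat list \<Rightarrow> complex mat \<Rightarrow> complex mat" where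
  "apply_channel Ks \<rho> = msum2 (\<lambda>K. K * \<rho> * mat_adjoint K) Ks"

text \<open>Complementary channel to the environment (Stinespring V = sum_i K_i (x) |i>):
  (E_E rho)_{ij} = Tr(K_i rho K_j^H).\<close>

definition compl_channel :: "complex mat list \<Rightarrow> complex mat \<Rightarrow> complex mat" where
  "compl_channel Ks \<rho> = mat (length Ks) (length Ks)
     (\<lambda>(i,j). mtrace (Ks ! i * \<rho> * mat_adjoint (Ks ! j)))"

definition unitary2 :: "complex mat \<Rightarrow> bool" where
  "unitary2 U \<longleftrightarrow> U \<in> carrier_mat 2 2 \<and> U * mat_adjoint U = 1\<^sub>m 2"

definition compose_unitaries :: "complex mat \<Rightarrow> complex mat list \<Rightarrow> complex mat \<Rightarrow> complex mat list" where
  "compose_unitaries UB Ks UA = map (\<lambda>K. UB * K * UA) Ks"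

definition post_unitary :: "complex mat \<Rightarrow> complex mat list \<Rightarrow> complex mat list" where
  "post_unitary UB Ks = map (\<lambda>K. UB * K) Ks"

section \<open>Pauli matrices, Stokes parameterization (ordering z, x, y)\<close>

definition pauli :: "nat \<Rightarrow> complex mat" where
  "pauli a = (if a = 0 then mat_of_rows_list 2 [[1, 0], [0, -1]]
              else if a = 1 then mat_of_rows_list 2 [[0, 1], [1, 0]]
              else mat_of_rows_list 2 [[0, -\<i>], [\<i>, 0]])"

text \<open>theta_a = Tr(rho sigma_a); the channel acts as theta -> R theta + t, so
  R_ab = Tr(sigma_a E(sigma_b))/2 and t_a = Tr(sigma_a E(I))/2.\<close>

definition stokes_R :: "complex mat list \<Rightarrow> real mat" where
  "stokes_R Ks = mat 3 3 (\<lambda>(a,b). Re (mtrace (pauli a * apply_channel Ks (pauli b))) / 2)"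

definition stokes_t :: "complex mat list \<Rightarrow> real vec" where
  "stokes_t Ks = vec 3 (\<lambda>a. Re (mtrace (pauli a * apply_channel Ks (1\<^sub>m 2))) / 2)"

definition unital :: "complex mat list \<Rightarrow> bool" where
  "unital Ks \<longleftrightarrow> stokes_t Ks = 0\<^sub>v 3"

definition rotation3 :: "real mat \<Rightarrow> bool" where
  "rotation3 Q \<longleftrightarrow> Q \<in> carrier_mat 3 3 \<and> Q * transpose_mat Q = 1\<^sub>m 3 \<and> det Q = 1"

definition eta :: "real \<Rightarrow> real" where
  "eta p = (if p \<le> 0 then 0 else - p * log 2 p)"

definition vn_entropy :: "complex mat \<Rightarrow> real" where
  "vn_entropy \<rho> = (\<Sum>z\<in>{z. eigenvalue \<rho> z}. real (Polynomial.order z (char_poly \<rho>)) * eta (Re z))"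

definition ket_proj :: "nat \<Rightarrow> complex mat" where
  "ket_proj x = mat 2 2 (\<lambda>(i,j). if i = x \<and> j = x then 1 else 0)"

definition rho_XE :: "complex mat list \<Rightarrow> complex mat" where
  "rho_XE Ks = four_block_mat ((1/2) \<cdot>\<^sub>m compl_channel Ks (ket_proj 0))
      (0\<^sub>m (length Ks) (length Ks)) (0\<^sub>m (length Ks) (length Ks))
      ((1/2) \<cdot>\<^sub>m compl_channel Ks (ket_proj 1))"

definition rho_E :: "complex mat list \<Rightarrow> complex mat" where
  "rho_E Ks = (1/2) \<cdot>\<^sub>m compl_channel Ks (ket_proj 0) + (1/2) \<cdot>\<^sub>m compl_channel Ks (ket_proj 1)"

definition H_XE :: "complex mat list \<Rightarrow> real" where
  "H_XE Ks = vn_entropy (rho_XE Ks) - vn_entropy (rho_E Ks)"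

definition P_XY :: "complex mat list \<Rightarrow> nat \<Rightarrow> nat \<Rightarrow> real" where
  "P_XY Ks x y = Re (apply_channel Ks (ket_proj x) $$ (y, y)) / 2"

definition H_XY :: "complex mat list \<Rightarrow> real" where
  "H_XY Ks = (\<Sum>x<2. \<Sum>y<2. let p = P_XY Ks x y; q = (\<Sum>x'<2. P_XY Ks x' y) in
               if p \<le> 0 then 0 else - p * log 2 (p / q))"

definition key_rate :: "complex mat list \<Rightarrow> real" where
  "key_rate Ks = H_XE Ks - H_XY Ks"

definition F1 :: "complex mat list \<Rightarrow> real" where
  "F1 Ks = (SUP UB \<in> {U. unitary2 U}. key_rate (post_unitary UB Ks))"

definition F2 :: "complex mat list \<Rightarrow> real" where
  "F2 Ks = (SUP p \<in> {(UA, UB). unitary2 UA \<and> unitary2 UB}.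
              key_rate (compose_unitaries (snd p) Ks (fst p)))"

end

theory Submission
  imports Defs
begin

text \<open>Write \<open>M = \<E>(|0\<rangle>\<langle>0|)\<close>, \<open>a = M\<^sub>0\<^sub>0\<close>, \<open>d = det M\<close> and \<open>s = \<surd>(1 - 4d)\<close>
  for a unital channel \<open>\<E>\<close>. Then \<open>H(X|Y)\<close> is the binary entropy \<open>h(a)\<close>. The two blocks
  \<open>\<E>\<^sub>E(|x\<rangle>\<langle>x|)/2\<close> of \<open>\<rho>\<^sub>X\<^sub>E\<close> share, by Sylvester's identity, their nonzero spectrum with
  \<open>\<E>(|x\<rangle>\<langle>x|)/2\<close>, which is \<open>(1 \<plusminus> s)/4\<close> for both \<open>x\<close>, so
  \<open>H(XE) = 1 + h((1 + s)/2)\<close>; and \<open>\<rho>\<^sub>E\<close>, the Gram matrix of the Kraus operators, is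
  invariant under \<open>\<E> \<mapsto> \<U>\<^sub>B \<circ> \<E> \<circ> \<U>\<^sub>A\<close>. Hence every key rate is
  \<open>1 + h(\<lambda>) - h(a) - S(\<rho>\<^sub>E)\<close> with \<open>\<lambda> = (1 + s)/2\<close> the larger eigenvalue of \<open>M\<close>.
  Since \<open>\<lambda>\<close> majorises the diagonal entry \<open>a\<close>, this is at most \<open>1 - S(\<rho>\<^sub>E)\<close>, with
  equality when \<open>M\<close> is diagonal. The Bloch vector of \<open>\<E>(|0\<rangle>\<langle>0|)\<close> is the first column of
  \<open>R\<close>; a rotation whose first row is parallel to it turns it onto the \<open>z\<close>-axis, so
  \<open>\<U>\<^sub>B\<^sup>*\<close> makes \<open>M\<close> diagonal and attains the common bound of \<open>F\<^sub>1\<close> and \<open>F\<^sub>2\<close>.\<close>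

lemma mat_adjoint_dim [simp]:
  "dim_row (mat_adjoint A) = dim_col A" "dim_col (mat_adjoint A) = dim_row A"
  by (auto simp: mat_adjoint_def mat_of_rows_def)

lemma mat_adjoint_carrier [simp]: "A \<in> carrier_mat n m \<Longrightarrow> mat_adjoint A \<in> carrier_mat m n"
  by (simp add: mat_adjoint_def mat_of_rows_def)

lemma mat_adjoint_index [simp]:
  "i < dim_col A \<Longrightarrow> j < dim_row A \<Longrightarrow> mat_adjoint A $$ (i, j) = cnj (A $$ (j, i))"
  by (simp add: mat_adjoint_def mat_of_rows_def col_def)

lemma mat_adjoint_mult:
  fixes A B :: "complex mat"
  assumes A: "A \<in> carrier_mat n m" and B: "B \<in> carrier_mat m k"
  shows "mat_adjoint (A * B) = mat_adjoint B * mat_adjoint A"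
  by (rule eq_matI) (use A B in \<open>auto simp: scalar_prod_def ac_simps\<close>)

lemma mat_adjoint_one [simp]: "mat_adjoint (1\<^sub>m n :: complex mat) = 1\<^sub>m n"
  by (rule eq_matI) auto

lemma mult_carrier_mat_2 [simp]:
  "A \<in> carrier_mat 2 2 \<Longrightarrow> B \<in> carrier_mat 2 2 \<Longrightarrow> A * B \<in> carrier_mat 2 2"
  by auto

lemma sum_lessThan_2: "(\<Sum>i<(2 :: nat). f i) = f 0 + (f 1 :: 'a :: comm_monoid_add)"
  by (simp add: numeral_2_eq_2)

lemma sum_lessThan_3: "(\<Sum>i<(3 :: nat). f i) = f 0 + f 1 + (f 2 :: 'a :: comm_monoid_add)"
proof -
  have "{..<3 :: nat} = {0, 1, 2}" by auto
  then show ?thesis by (simp add: ac_simps)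
qed

lemma less_3_cases_iff: "(n :: nat) < 3 \<longleftrightarrow> n = 0 \<or> n = 1 \<or> n = 2"
  by auto

lemma index_mult_mat_2:
  assumes "A \<in> carrier_mat 2 2" "B \<in> carrier_mat 2 2" "i < 2" "j < 2"
  shows "(A * B) $$ (i, j) = A $$ (i, 0) * B $$ (0, j) + A $$ (i, 1) * B $$ (1, j)"
  using assms by (simp add: scalar_prod_def numeral_2_eq_2)

lemma mtrace_2: "A \<in> carrier_mat 2 2 \<Longrightarrow> mtrace A = A $$ (0, 0) + A $$ (1, 1)"
  by (simp add: mtrace_def numeral_2_eq_2)

lemma mtrace_mult_comm_2:
  assumes A: "A \<in> carrier_mat 2 2" and B: "B \<in> carrier_mat 2 2"
  shows "mtrace (A * B) = mtrace (B * A)"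
  unfolding mtrace_2[OF mult_carrier_mat[OF A B]] mtrace_2[OF mult_carrier_mat[OF B A]]
  by (simp add: index_mult_mat_2[OF A B] index_mult_mat_2[OF B A])

lemma sandwich_index_2:
  assumes K: "K \<in> carrier_mat 2 2" and \<rho>: "\<rho> \<in> carrier_mat 2 2" and L: "L \<in> carrier_mat 2 2"
    and "s < 2" "t < 2"
  shows "(K * \<rho> * mat_adjoint L) $$ (s, t) =
    (K $$ (s, 0) * \<rho> $$ (0, 0) + K $$ (s, 1) * \<rho> $$ (1, 0)) * cnj (L $$ (t, 0)) +
    (K $$ (s, 0) * \<rho> $$ (0, 1) + K $$ (s, 1) * \<rho> $$ (1, 1)) * cnj (L $$ (t, 1))"
proof -
  have K\<rho>: "K * \<rho> \<in> carrier_mat 2 2" and L': "mat_adjoint L \<in> carrier_mat 2 2"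
    using K \<rho> L by auto
  show ?thesis
    unfolding index_mult_mat_2[OF K\<rho> L' assms(4,5)]
    using assms by (simp add: scalar_prod_def numeral_2_eq_2)
qed

lemma det_2:
  assumes A: "(A :: 'a :: idom mat) \<in> carrier_mat 2 2"
  shows "det A = A $$ (0, 0) * A $$ (1, 1) - A $$ (0, 1) * A $$ (1, 0)"
proof -
  let ?s = "\<lambda>x. mat 1 1 (\<lambda>_. x) :: 'a mat"
  have blocks: "A = four_block_mat (?s (A $$ (0, 0))) (?s (A $$ (0, 1))) (?s (A $$ (1, 0))) (?s (A $$ (1, 1)))"
    by (rule eq_matI) (use A in \<open>auto simp: four_block_mat_def less_Suc_eq numeral_2_eq_2\<close>)
  have "det A = det (?s (A $$ (0, 0)) * ?s (A $$ (1, 1)) - ?s (A $$ (0, 1)) * ?s (A $$ (1, 0)))"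
    by (subst blocks, rule det_four_block_mat) (auto intro!: eq_matI simp: scalar_prod_def ac_simps)
  also have "\<dots> = A $$ (0, 0) * A $$ (1, 1) - A $$ (0, 1) * A $$ (1, 0)"
    by (subst det_single) (auto simp: scalar_prod_def)
  finally show ?thesis .
qed

lemma char_poly_2:
  assumes "(A :: 'a :: idom mat) \<in> carrier_mat 2 2"
  shows "char_poly A =
    [:A $$ (0, 0) * A $$ (1, 1) - A $$ (0, 1) * A $$ (1, 0), - (A $$ (0, 0) + A $$ (1, 1)), 1:]"
  unfolding char_poly_def using assms
  by (subst det_2) (auto simp: char_poly_matrix_def algebra_simps)

lemma char_poly_nonzero: "A \<in> carrier_mat n n \<Longrightarrow> char_poly A \<noteq> (0 :: 'a :: idom poly)"
  using degree_monic_char_poly[of A n] by auto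

lemma char_poly_four_block_diag:
  fixes A :: "'a :: idom mat"
  assumes A: "A \<in> carrier_mat n n" and B: "B \<in> carrier_mat m m"
  shows "char_poly (four_block_mat A (0\<^sub>m n m) (0\<^sub>m m n) B) = char_poly A * char_poly B"
proof -
  have "char_poly_matrix (four_block_mat A (0\<^sub>m n m) (0\<^sub>m m n) B) =
     four_block_mat (char_poly_matrix A) (0\<^sub>m n m) (0\<^sub>m m n) (char_poly_matrix B)"
    by (rule eq_matI) (use A B in \<open>auto simp: char_poly_matrix_def\<close>)
  then show ?thesis
    unfolding char_poly_def using A B
    by (simp, subst det_four_block_mat_upper_right_zero[OF _ refl]) auto
qed

lemma const_poly_sum: "(\<Sum>k\<in>K. [:f k:]) = [:sum f K:]"
  by (induct K rule: infinite_finite_induct) (simp_all add: ac_simps)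

section \<open>Spectral sums and von Neumann entropy\<close>

lemma char_poly_mult_eq_det:
  fixes A :: "'a :: idom mat"
  assumes A: "A \<in> carrier_mat n m" and B: "B \<in> carrier_mat m n"
  shows "char_poly (A * B) = det ([:0, 1:] \<cdot>\<^sub>m 1\<^sub>m n - map_mat (\<lambda>a. [:a:]) A * map_mat (\<lambda>a. [:a:]) B)"
  unfolding char_poly_def char_poly_matrix_def
  by (rule arg_cong[of _ _ det], rule eq_matI)
    (use A B in \<open>auto simp: scalar_prod_def const_poly_sum ac_simps\<close>)

text \<open>Sylvester's determinant identity, from the two block-triangular factorisations of
  \<open>[[x I, P], [Q, I]]\<close>.\<close>

lemma det_sylvester:
  fixes P :: "'a :: idom mat" and Q :: "'a mat"
  assumes P: "P \<in> carrier_mat m n" and Q: "Q \<in> carrier_mat n m"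
  shows "x ^ n * det (x \<cdot>\<^sub>m 1\<^sub>m m - P * Q) = x ^ m * det (x \<cdot>\<^sub>m 1\<^sub>m n - Q * P)"
proof -
  define A where "A = four_block_mat (x \<cdot>\<^sub>m 1\<^sub>m m) P Q (1\<^sub>m n)"
  define L1 where "L1 = four_block_mat (1\<^sub>m m) (- P) (0\<^sub>m n m) (1\<^sub>m n)"
  define L2 where "L2 = four_block_mat (1\<^sub>m m) (0\<^sub>m m n) (- Q) (x \<cdot>\<^sub>m 1\<^sub>m n)"
  have A: "A \<in> carrier_mat (m + n) (m + n)"
    and L1: "L1 \<in> carrier_mat (m + n) (m + n)"
    and L2: "L2 \<in> carrier_mat (m + n) (m + n)"
    using P Q by (auto simp: A_def L1_def L2_def)
  have "L1 * A = four_block_mat (x \<cdot>\<^sub>m 1\<^sub>m m - P * Q) (0\<^sub>m m n) Q (1\<^sub>m n)"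
    unfolding L1_def A_def
    by (subst mult_four_block_mat[OF one_carrier_mat uminus_carrier_mat[OF P] zero_carrier_mat
          one_carrier_mat smult_carrier_mat[OF one_carrier_mat] P Q one_carrier_mat])
      (use P Q in \<open>auto simp: minus_add_uminus_mat\<close>)
  then have det_L1A: "det (L1 * A) = det (x \<cdot>\<^sub>m 1\<^sub>m m - P * Q)"
    using P Q by (simp, subst det_four_block_mat_upper_right_zero[OF _ refl Q one_carrier_mat]) auto
  have "L2 * A = four_block_mat (x \<cdot>\<^sub>m 1\<^sub>m m) P (0\<^sub>m n m) (x \<cdot>\<^sub>m 1\<^sub>m n - Q * P)"
    unfolding L2_def A_def
    by (subst mult_four_block_mat[OF one_carrier_mat zero_carrier_mat uminus_carrier_mat[OF Q]
          smult_carrier_mat[OF one_carrier_mat] smult_carrier_mat[OF one_carrier_mat] P Q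
          one_carrier_mat])
      (use P Q in auto)
  then have det_L2A: "det (L2 * A) = x ^ m * det (x \<cdot>\<^sub>m 1\<^sub>m n - Q * P)"
    using P Q by (simp, subst det_four_block_mat_lower_left_zero[OF _ P refl]) auto
  have "det L1 = 1"
    unfolding L1_def using P
    by (subst det_four_block_mat_lower_left_zero[OF _ uminus_carrier_mat[OF P] refl]) auto
  then have "det (L1 * A) = det A" using det_mult[OF L1 A] by simp
  moreover have "det L2 = x ^ n"
    unfolding L2_def using Q
    by (subst det_four_block_mat_upper_right_zero[OF _ refl uminus_carrier_mat[OF Q]]) auto
  then have "det (L2 * A) = x ^ n * det A" using det_mult[OF L2 A] by simp
  ultimately show ?thesis using det_L1A det_L2A by simp
qed

lemma char_poly_mult_comm:
  fixes Z :: "'a :: idom mat" and W :: "'a mat"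
  assumes Z: "Z \<in> carrier_mat n m" and W: "W \<in> carrier_mat m n"
  shows "[:0, 1:] ^ n * char_poly (W * Z) = [:0, 1:] ^ m * char_poly (Z * W)"
  unfolding char_poly_mult_eq_det[OF W Z] char_poly_mult_eq_det[OF Z W]
  by (rule det_sylvester) (use Z W in auto)

definition root_sum :: "(complex \<Rightarrow> real) \<Rightarrow> complex poly \<Rightarrow> real" where
  "root_sum f p = (\<Sum>z\<in>{z. poly p z = 0}. real (Polynomial.order z p) * f z)"

lemma root_sum_superset:
  assumes "p \<noteq> 0" "finite A" "{z. poly p z = 0} \<subseteq> A"
  shows "root_sum f p = (\<Sum>z\<in>A. real (Polynomial.order z p) * f z)"
  unfolding root_sum_def by (rule sum.mono_neutral_left) (use assms in \<open>auto simp: order_0I\<close>)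

lemma root_sum_mult:
  assumes p: "p \<noteq> 0" and q: "q \<noteq> 0"
  shows "root_sum f (p * q) = root_sum f p + root_sum f q"
proof -
  let ?A = "{z. poly p z = 0} \<union> {z. poly q z = 0}"
  have fin: "finite ?A" using poly_roots_finite p q by auto
  have pq: "p * q \<noteq> 0" using p q by auto
  have "root_sum f (p * q) = (\<Sum>z\<in>?A. real (Polynomial.order z (p * q)) * f z)"
    by (rule root_sum_superset[OF pq fin]) auto
  also have "\<dots> = (\<Sum>z\<in>?A. real (Polynomial.order z p) * f z + real (Polynomial.order z q) * f z)"
    using order_mult[OF pq] by (intro sum.cong) (auto simp: algebra_simps)
  also have "\<dots> = root_sum f p + root_sum f q"
    by (simp add: sum.distrib root_sum_superset[OF p fin] root_sum_superset[OF q fin])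
  finally show ?thesis .
qed

lemma root_sum_X_power: "f 0 = 0 \<Longrightarrow> root_sum f ([:0, 1:] ^ k) = 0"
  unfolding root_sum_def by (intro sum.neutral) auto

lemma root_sum_linear: "root_sum f [:- a, 1:] = f a"
proof -
  have "{z. poly [:- a, 1:] z = 0} = {a}" by auto
  then show ?thesis unfolding root_sum_def using order_power_n_n[of a 1] by simp
qed

lemma root_sum_char_poly_mult_comm:
  assumes f: "f 0 = 0" and Z: "Z \<in> carrier_mat n m" and W: "W \<in> carrier_mat m n"
  shows "root_sum f (char_poly (Z * W)) = root_sum f (char_poly (W * Z))"
proof -
  have X: "\<And>k. ([:0, 1:] :: complex poly) ^ k \<noteq> 0" by simp
  have ZW: "char_poly (Z * W) \<noteq> 0" and WZ: "char_poly (W * Z) \<noteq> 0"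
    using char_poly_nonzero[of "Z * W" n] char_poly_nonzero[of "W * Z" m] Z W by auto
  have "root_sum f (char_poly (Z * W)) = root_sum f ([:0, 1:] ^ m * char_poly (Z * W))"
    by (simp add: root_sum_mult[OF X ZW] root_sum_X_power[of f, OF f])
  also have "\<dots> = root_sum f ([:0, 1:] ^ n * char_poly (W * Z))"
    by (simp add: char_poly_mult_comm[OF Z W])
  also have "\<dots> = root_sum f (char_poly (W * Z))"
    by (simp add: root_sum_mult[OF X WZ] root_sum_X_power[of f, OF f])
  finally show ?thesis .
qed

lemma vn_entropy_root_sum:
  assumes "A \<in> carrier_mat n n"
  shows "vn_entropy A = root_sum (\<lambda>z. eta (Re z)) (char_poly A)"
proof -
  have "Collect (eigenvalue A) = {z. poly (char_poly A) z = 0}"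
    using eigenvalue_root_char_poly[OF assms] by auto
  then show ?thesis unfolding vn_entropy_def root_sum_def by simp
qed

lemma vn_entropy_mult_comm:
  assumes Z: "Z \<in> carrier_mat n m" and W: "W \<in> carrier_mat m n"
  shows "vn_entropy (Z * W) = vn_entropy (W * Z)"
  using Z W
  by (simp add: vn_entropy_root_sum[of _ n] vn_entropy_root_sum[of _ m]
      root_sum_char_poly_mult_comm eta_def)

lemma vn_entropy_four_block_diag:
  assumes A: "A \<in> carrier_mat n n" and B: "B \<in> carrier_mat m m"
  shows "vn_entropy (four_block_mat A (0\<^sub>m n m) (0\<^sub>m m n) B) = vn_entropy A + vn_entropy B"
  using A B
  by (simp add: vn_entropy_root_sum[of _ "n + m"] vn_entropy_root_sum[of _ n]
      vn_entropy_root_sum[of _ m] char_poly_four_block_diag root_sum_mult char_poly_nonzero)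

lemma vn_entropy_2:
  assumes A: "A \<in> carrier_mat 2 2"
    and tr: "A $$ (0, 0) + A $$ (1, 1) = of_real (\<mu> + \<nu>)"
    and det: "A $$ (0, 0) * A $$ (1, 1) - A $$ (0, 1) * A $$ (1, 0) = of_real (\<mu> * \<nu>)"
  shows "vn_entropy A = eta \<mu> + eta \<nu>"
proof -
  have cp: "char_poly A = [:- of_real \<mu>, 1:] * [:- of_real \<nu>, 1:]"
    unfolding char_poly_2[OF A] tr det by (simp add: algebra_simps)
  have "vn_entropy A = root_sum (\<lambda>z. eta (Re z)) [:- of_real \<mu>, 1:] +
      root_sum (\<lambda>z. eta (Re z)) [:- of_real \<nu>, 1:]"
    unfolding vn_entropy_root_sum[OF A] cp by (rule root_sum_mult) simp_all
  then show ?thesis by (simp add: root_sum_linear)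
qed

definition binary_entropy :: "real \<Rightarrow> real" where
  "binary_entropy x = eta x + eta (1 - x)"

lemma eta_nonneg: "0 \<le> x \<Longrightarrow> x \<le> 1 \<Longrightarrow> 0 \<le> eta x"
  unfolding eta_def by (auto simp: mult_nonneg_nonpos)

lemma eta_half: "0 \<le> x \<Longrightarrow> eta (x / 2) = x / 2 + eta x / 2"
  unfolding eta_def by (auto simp: log_divide algebra_simps)

lemma binary_entropy_one_minus [simp]: "binary_entropy (1 - x) = binary_entropy x"
  unfolding binary_entropy_def by simp

lemma binary_entropy_max: "binary_entropy (max x (1 - x)) = binary_entropy x"
  by (simp add: max_def)

lemma binary_entropy_antimono:
  assumes "1/2 \<le> x" "x \<le> y" "y \<le> 1"
  shows "binary_entropy y \<le> binary_entropy x"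
proof (cases "y = 1")
  case True
  then show ?thesis
    using assms eta_nonneg[of x] eta_nonneg[of "1 - x"]
    by (simp add: binary_entropy_def eta_def)
next
  case False
  define g where "g t = - t * log 2 t - (1 - t) * log 2 (1 - t)" for t :: real
  have g: "binary_entropy t = g t" if "0 < t" "t < 1" for t
    using that unfolding binary_entropy_def eta_def g_def by (auto simp: algebra_simps)
  have "g y \<le> g x"
  proof (rule DERIV_nonpos_imp_nonincreasing[OF assms(2)])
    fix t assume t: "x \<le> t" "t \<le> y"
    then have t01: "0 < t" "t < 1" using assms False by auto
    have "DERIV g t :> (- (log 2 t + t * (1 / (t * ln 2)))
        - (- log 2 (1 - t) + (1 - t) * (- 1 / ((1 - t) * ln 2))))"
      unfolding g_def using t01 by (auto intro!: derivative_eq_intros)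
    moreover have "(- (log 2 t + t * (1 / (t * ln 2)))
        - (- log 2 (1 - t) + (1 - t) * (- 1 / ((1 - t) * ln 2)))) = log 2 (1 - t) - log 2 t"
      using t01 by (simp add: field_simps)
    moreover have "log 2 (1 - t) \<le> log 2 t" using t01 t assms by simp
    ultimately show "\<exists>d. DERIV g t :> d \<and> d \<le> 0" by auto
  qed
  then show ?thesis using g assms False by simp
qed

lemma eta_quarters:
  assumes "0 \<le> s" "s \<le> 1"
  shows "2 * (eta ((1 + s) / 4) + eta ((1 - s) / 4)) = 1 + binary_entropy ((1 + s) / 2)"
  using eta_half[of "(1 + s) / 2"] eta_half[of "1 - (1 + s) / 2"] assms
  by (simp add: binary_entropy_def field_simps)

text \<open>For a \<open>2 \<times> 2\<close> state with diagonal entry \<open>a\<close> and determinant \<open>d\<close>, the larger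
  eigenvalue \<open>(1 + \<surd>(1 - 4d))/2\<close> majorises the diagonal, so its binary entropy is
  smaller; equality holds for diagonal states.\<close>

lemma binary_entropy_eigenvalue_le:
  assumes d: "0 \<le> d" "d \<le> a * (1 - a)"
  shows "binary_entropy ((1 + sqrt (1 - 4 * d)) / 2) \<le> binary_entropy a"
proof -
  define s where "s = sqrt (1 - 4 * d)"
  have "a * (1 - a) \<le> 1/4"
    using zero_le_power2[of "2 * a - 1"] by (simp add: power2_eq_square algebra_simps)
  then have s: "0 \<le> s" "s \<le> 1" and s2: "s\<^sup>2 = 1 - 4 * d"
    using d unfolding s_def by auto
  have "(1 - 2 * a)\<^sup>2 \<le> s\<^sup>2" unfolding s2 using d by (simp add: power2_eq_square algebra_simps)
  then have "\<bar>1 - 2 * a\<bar> \<le> s" using s power2_le_imp_le[of "\<bar>1 - 2 * a\<bar>" s] by simp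
  then have "max a (1 - a) \<le> (1 + s) / 2" by (auto simp: max_def abs_if split: if_splits)
  then have "binary_entropy ((1 + s) / 2) \<le> binary_entropy (max a (1 - a))"
    using s by (intro binary_entropy_antimono) (auto simp: max_def)
  then show ?thesis unfolding s_def binary_entropy_max .
qed

lemma binary_entropy_eigenvalue_diagonal:
  "binary_entropy ((1 + sqrt (1 - 4 * (a * (1 - a)))) / 2) = binary_entropy a"
proof -
  have "1 - 4 * (a * (1 - a)) = (1 - 2 * a)\<^sup>2" by (simp add: power2_eq_square algebra_simps)
  then have "(1 + sqrt (1 - 4 * (a * (1 - a)))) / 2 = max a (1 - a)"
    by (auto simp: max_def abs_if)
  then show ?thesis by (simp add: binary_entropy_max)
qed

lemma cmod_sum_mult_cnj_le:
  fixes x y :: "nat \<Rightarrow> complex"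
  shows "(cmod (\<Sum>i<n. x i * cnj (y i)))\<^sup>2 \<le> (\<Sum>i<n. (cmod (x i))\<^sup>2) * (\<Sum>i<n. (cmod (y i))\<^sup>2)"
proof -
  define A where "A = (\<Sum>i<n. (cmod (x i))\<^sup>2)"
  define B where "B = (\<Sum>i<n. (cmod (y i))\<^sup>2)"
  define C where "C = (\<Sum>i<n. x i * cnj (y i))"
  have A0: "0 \<le> A" and B0: "0 \<le> B" unfolding A_def B_def by (simp_all add: sum_nonneg)
  have expand: "(cmod (of_real B * x i - C * y i))\<^sup>2
      = B\<^sup>2 * (cmod (x i))\<^sup>2 - 2 * B * Re (cnj C * (x i * cnj (y i))) + (cmod C)\<^sup>2 * (cmod (y i))\<^sup>2"
    for i unfolding cmod_power2 by (simp add: power2_eq_square algebra_simps)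
  have "(\<Sum>i<n. Re (cnj C * (x i * cnj (y i)))) = Re (cnj C * C)"
    unfolding C_def by (simp add: sum_distrib_left)
  also have "\<dots> = (cmod C)\<^sup>2" unfolding cmod_power2 by (simp add: power2_eq_square)
  finally have re_C: "(\<Sum>i<n. Re (cnj C * (x i * cnj (y i)))) = (cmod C)\<^sup>2" .
  have "0 \<le> (\<Sum>i<n. (cmod (of_real B * x i - C * y i))\<^sup>2)" by (simp add: sum_nonneg)
  also have "\<dots> = B\<^sup>2 * A - 2 * B * (cmod C)\<^sup>2 + (cmod C)\<^sup>2 * B"
    by (simp only: expand sum.distrib sum_subtractf sum_distrib_left[symmetric] re_C
        A_def[symmetric] B_def[symmetric])
  finally have main: "0 \<le> B * (B * A - (cmod C)\<^sup>2)" by (simp add: power2_eq_square algebra_simps)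
  show ?thesis
  proof (cases "B = 0")
    case True
    then have "\<forall>i\<in>{..<n}. (cmod (y i))\<^sup>2 = 0" unfolding B_def by (subst (asm) sum_nonneg_eq_0_iff) auto
    then have "C = 0" unfolding C_def by simp
    then show ?thesis using A0 B0 by (simp add: A_def[symmetric] B_def[symmetric] C_def[symmetric])
  next
    case False
    then have "0 \<le> B * A - (cmod C)\<^sup>2" using main B0 by (simp add: zero_le_mult_iff)
    then show ?thesis by (simp add: A_def[symmetric] B_def[symmetric] C_def[symmetric] algebra_simps)
  qed
qed

lemma msum2_Nil [simp]: "msum2 f [] = 0\<^sub>m 2 2"
  by (simp add: msum2_def)

lemma msum2_Cons [simp]: "msum2 f (K # Ks) = f K + msum2 f Ks"
  by (simp add: msum2_def)

lemma msum2_carrier: "\<forall>K\<in>set Ks. f K \<in> carrier_mat 2 2 \<Longrightarrow> msum2 f Ks \<in> carrier_mat 2 2"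
  by (induct Ks) auto

lemma msum2_index:
  assumes "\<forall>K\<in>set Ks. f K \<in> carrier_mat 2 2" "i < 2" "j < 2"
  shows "msum2 f Ks $$ (i, j) = (\<Sum>k<length Ks. f (Ks ! k) $$ (i, j))"
  using assms
proof (induct Ks)
  case (Cons K Ks)
  then have "msum2 f (K # Ks) $$ (i, j) = f K $$ (i, j) + msum2 f Ks $$ (i, j)"
    using msum2_carrier[of Ks f] by simp
  with Cons show ?case by (simp only: length_Cons sum.lessThan_Suc_shift nth_Cons_0 nth_Cons_Suc) simp
qed simp

lemma msum2_map: "msum2 f (map g Ks) = msum2 (\<lambda>K. f (g K)) Ks"
  by (induct Ks) auto

lemma msum2_cong: "(\<And>K. K \<in> set Ks \<Longrightarrow> f K = g K) \<Longrightarrow> msum2 f Ks = msum2 g Ks"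
  by (induct Ks) auto

lemma msum2_mult_left_right:
  assumes "\<forall>K\<in>set Ks. f K \<in> carrier_mat 2 2" and U: "U \<in> carrier_mat 2 2" and V: "V \<in> carrier_mat 2 2"
  shows "msum2 (\<lambda>K. U * f K * V) Ks = U * msum2 f Ks * V"
  using assms(1)
proof (induct Ks)
  case Nil
  then show ?case using U V by simp
next
  case (Cons K Ks)
  then have fK: "f K \<in> carrier_mat 2 2" and S: "msum2 f Ks \<in> carrier_mat 2 2"
    using msum2_carrier by auto
  have "msum2 (\<lambda>K. U * f K * V) (K # Ks) = U * f K * V + U * msum2 f Ks * V"
    using Cons by simp
  also have "\<dots> = (U * f K + U * msum2 f Ks) * V"
    by (rule add_mult_distrib_mat[symmetric]) (use fK S U V in auto)
  also have "\<dots> = U * (f K + msum2 f Ks) * V"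
    by (simp add: mult_add_distrib_mat[OF U fK S])
  finally show ?case by simp
qed

lemma qubit_channel_carrier: "qubit_channel Ks \<Longrightarrow> \<forall>K\<in>set Ks. K \<in> carrier_mat 2 2"
  unfolding qubit_channel_def by auto

lemma ket_proj_carrier [simp]: "ket_proj x \<in> carrier_mat 2 2"
  by (simp add: ket_proj_def)

lemma apply_channel_carrier:
  "\<forall>K\<in>set Ks. K \<in> carrier_mat 2 2 \<Longrightarrow> \<rho> \<in> carrier_mat 2 2 \<Longrightarrow> apply_channel Ks \<rho> \<in> carrier_mat 2 2"
  unfolding apply_channel_def by (rule msum2_carrier) auto

lemma apply_channel_index:
  assumes Ks: "\<forall>K\<in>set Ks. K \<in> carrier_mat 2 2" and \<rho>: "\<rho> \<in> carrier_mat 2 2" and "s < 2" "t < 2"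
  shows "apply_channel Ks \<rho> $$ (s, t) = (\<Sum>i<length Ks.
    (Ks!i $$ (s, 0) * \<rho> $$ (0, 0) + Ks!i $$ (s, 1) * \<rho> $$ (1, 0)) * cnj (Ks!i $$ (t, 0)) +
    (Ks!i $$ (s, 0) * \<rho> $$ (0, 1) + Ks!i $$ (s, 1) * \<rho> $$ (1, 1)) * cnj (Ks!i $$ (t, 1)))"
proof -
  have "apply_channel Ks \<rho> $$ (s, t) = (\<Sum>i<length Ks. (Ks!i * \<rho> * mat_adjoint (Ks!i)) $$ (s, t))"
    unfolding apply_channel_def using assms by (intro msum2_index) auto
  also have "\<dots> = (\<Sum>i<length Ks.
    (Ks!i $$ (s, 0) * \<rho> $$ (0, 0) + Ks!i $$ (s, 1) * \<rho> $$ (1, 0)) * cnj (Ks!i $$ (t, 0)) +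
    (Ks!i $$ (s, 0) * \<rho> $$ (0, 1) + Ks!i $$ (s, 1) * \<rho> $$ (1, 1)) * cnj (Ks!i $$ (t, 1)))"
    using assms by (intro sum.cong refl sandwich_index_2) auto
  finally show ?thesis .
qed

lemma apply_channel_ket_proj_index:
  assumes "\<forall>K\<in>set Ks. K \<in> carrier_mat 2 2" "x < 2" "s < 2" "t < 2"
  shows "apply_channel Ks (ket_proj x) $$ (s, t) = (\<Sum>i<length Ks. Ks!i $$ (s, x) * cnj (Ks!i $$ (t, x)))"
  using assms
  by (subst apply_channel_index) (auto intro!: sum.cong simp: ket_proj_def less_2_cases_iff)

lemma apply_channel_add:
  assumes Ks: "\<forall>K\<in>set Ks. K \<in> carrier_mat 2 2" and A: "A \<in> carrier_mat 2 2" and B: "B \<in> carrier_mat 2 2"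
  shows "apply_channel Ks (A + B) = apply_channel Ks A + apply_channel Ks B"
  using Ks
proof (induction Ks)
  case Nil
  then show ?case by (simp add: apply_channel_def)
next
  case (Cons K Ks)
  then have K: "K \<in> carrier_mat 2 2" by simp
  let ?a = "K * A * mat_adjoint K" and ?b = "K * B * mat_adjoint K"
  have SA: "apply_channel Ks A \<in> carrier_mat 2 2" and SB: "apply_channel Ks B \<in> carrier_mat 2 2"
    using Cons A B by (auto intro: apply_channel_carrier)
  have "K * (A + B) * mat_adjoint K = (K * A + K * B) * mat_adjoint K"
    by (simp add: mult_add_distrib_mat[OF K A B])
  also have "\<dots> = ?a + ?b"
    by (rule add_mult_distrib_mat) (use K A B in auto)
  finally have "K * (A + B) * mat_adjoint K = ?a + ?b" .
  then have "apply_channel (K # Ks) (A + B) = (?a + ?b) + (apply_channel Ks A + apply_channel Ks B)"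
    using Cons by (simp add: apply_channel_def)
  also have "\<dots> = (?a + apply_channel Ks A) + (?b + apply_channel Ks B)"
    by (rule eq_matI) (use K A B SA SB in auto)
  finally show ?case by (simp add: apply_channel_def)
qed

lemma qubit_channel_columns_orthonormal:
  assumes qc: "qubit_channel Ks" and "c < 2" "c' < 2"
  shows "(\<Sum>i<length Ks. cnj (Ks!i $$ (0, c)) * Ks!i $$ (0, c') + cnj (Ks!i $$ (1, c)) * Ks!i $$ (1, c'))
    = (if c = c' then 1 else 0)"
proof -
  have Ks: "\<forall>K\<in>set Ks. K \<in> carrier_mat 2 2" by (rule qubit_channel_carrier[OF qc])
  have "(if c = c' then 1 else 0) = msum2 (\<lambda>K. mat_adjoint K * K) Ks $$ (c, c')"
    using qc assms unfolding qubit_channel_def by simp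
  also have "\<dots> = (\<Sum>i<length Ks. (mat_adjoint (Ks!i) * Ks!i) $$ (c, c'))"
    using Ks assms by (intro msum2_index) auto
  also have "\<dots> = (\<Sum>i<length Ks. cnj (Ks!i $$ (0, c)) * Ks!i $$ (0, c') + cnj (Ks!i $$ (1, c)) * Ks!i $$ (1, c'))"
  proof (rule sum.cong[OF refl])
    fix i assume "i \<in> {..<length Ks}"
    then have Ki: "Ks!i \<in> carrier_mat 2 2" using Ks by auto
    show "(mat_adjoint (Ks!i) * Ks!i) $$ (c, c') =
      cnj (Ks!i $$ (0, c)) * Ks!i $$ (0, c') + cnj (Ks!i $$ (1, c)) * Ks!i $$ (1, c')"
      unfolding index_mult_mat_2[OF mat_adjoint_carrier[OF Ki] Ki assms(2,3)]
      using assms(2) by (simp add: carrier_matD[OF Ki])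
  qed
  finally show ?thesis by simp
qed

text \<open>Entrywise description of a \<open>2 \<times> 2\<close> density matrix: Hermitian with trace one,
  nonnegative diagonal and nonnegative determinant.\<close>

definition qubit_state :: "complex mat \<Rightarrow> bool" where
  "qubit_state M \<longleftrightarrow> M \<in> carrier_mat 2 2 \<and> M $$ (0, 0) + M $$ (1, 1) = 1 \<and>
     Im (M $$ (0, 0)) = 0 \<and> Im (M $$ (1, 1)) = 0 \<and>
     M $$ (1, 0) = cnj (M $$ (0, 1)) \<and> 0 \<le> Re (M $$ (0, 0)) \<and> 0 \<le> Re (M $$ (1, 1)) \<and>
     (cmod (M $$ (0, 1)))\<^sup>2 \<le> Re (M $$ (0, 0)) * Re (M $$ (1, 1))"

lemma qubit_state_apply_channel_ket_proj:
  assumes qc: "qubit_channel Ks" and x: "x < 2"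
  shows "qubit_state (apply_channel Ks (ket_proj x))"
proof -
  have Ks: "\<forall>K\<in>set Ks. K \<in> carrier_mat 2 2" by (rule qubit_channel_carrier[OF qc])
  define M where "M = apply_channel Ks (ket_proj x)"
  define k where "k i r = Ks!i $$ (r, x)" for i r
  have M: "M $$ (s, t) = (\<Sum>i<length Ks. k i s * cnj (k i t))" if "s < 2" "t < 2" for s t
    unfolding M_def k_def using apply_channel_ket_proj_index[OF Ks x that] .
  define p where "p s = (\<Sum>i<length Ks. (cmod (k i s))\<^sup>2)" for s
  have diag: "M $$ (s, s) = of_real (p s)" if "s < 2" for s
    using that by (simp add: M p_def complex_norm_square[symmetric])
  have "M \<in> carrier_mat 2 2" unfolding M_def by (rule apply_channel_carrier[OF Ks ket_proj_carrier])
  moreover have "M $$ (0, 0) + M $$ (1, 1) = 1"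
    using qubit_channel_columns_orthonormal[OF qc x x]
    by (simp add: M k_def sum.distrib ac_simps)
  moreover have "M $$ (1, 0) = cnj (M $$ (0, 1))" by (simp add: M mult.commute)
  moreover have "0 \<le> p s" for s unfolding p_def by (simp add: sum_nonneg)
  moreover have "(cmod (M $$ (0, 1)))\<^sup>2 \<le> p 0 * p 1"
    using cmod_sum_mult_cnj_le[of "\<lambda>i. k i 0" "\<lambda>i. k i 1" "length Ks"] by (simp add: M p_def)
  ultimately show ?thesis
    using diag[of 0] diag[of 1] unfolding M_def[symmetric] qubit_state_def by simp
qed

lemma qubit_state_det_bounds:
  assumes "qubit_state M"
  defines "a \<equiv> Re (M $$ (0, 0))" and "d \<equiv> Re (M $$ (0, 0)) * Re (M $$ (1, 1)) - (cmod (M $$ (0, 1)))\<^sup>2"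
  shows "Re (M $$ (1, 1)) = 1 - a" and "0 \<le> d" and "d \<le> a * (1 - a)" and "d \<le> 1/4"
proof -
  show b: "Re (M $$ (1, 1)) = 1 - a"
    using assms(1) unfolding qubit_state_def a_def by (auto dest: arg_cong[where f = Re])
  show "0 \<le> d" using assms(1) unfolding qubit_state_def d_def by simp
  show "d \<le> a * (1 - a)" unfolding d_def a_def[symmetric] b by simp
  also have "a * (1 - a) \<le> 1/4"
    using zero_le_power2[of "2 * a - 1"] by (simp add: power2_eq_square algebra_simps)
  finally show "d \<le> 1/4" .
qed

lemma ket_proj_sum: "ket_proj 0 + ket_proj 1 = 1\<^sub>m 2"
proof (rule eq_matI)
  fix i j assume "i < dim_row (1\<^sub>m 2 :: complex mat)" "j < dim_col (1\<^sub>m 2 :: complex mat)"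
  then have "i = 0 \<or> i = 1" "j = 0 \<or> j = 1" by auto
  then show "(ket_proj 0 + ket_proj 1) $$ (i, j) = 1\<^sub>m 2 $$ (i, j)"
    by (elim disjE) (simp_all add: ket_proj_def)
qed (simp_all add: ket_proj_def)

lemma apply_channel_ket_proj_one:
  assumes qc: "qubit_channel Ks" and EI: "apply_channel Ks (1\<^sub>m 2) = 1\<^sub>m 2"
  shows "apply_channel Ks (ket_proj 1) = 1\<^sub>m 2 - apply_channel Ks (ket_proj 0)"
proof -
  have Ks: "\<forall>K\<in>set Ks. K \<in> carrier_mat 2 2" by (rule qubit_channel_carrier[OF qc])
  have M: "apply_channel Ks (ket_proj x) \<in> carrier_mat 2 2" for x
    by (rule apply_channel_carrier[OF Ks ket_proj_carrier])
  have sum: "apply_channel Ks (ket_proj 0) + apply_channel Ks (ket_proj 1) = 1\<^sub>m 2"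
    using apply_channel_add[OF Ks ket_proj_carrier[of 0] ket_proj_carrier[of 1]] EI
    unfolding ket_proj_sum by simp
  show ?thesis
  proof (rule eq_matI)
    fix i j assume "i < dim_row (1\<^sub>m 2 - apply_channel Ks (ket_proj 0))"
      "j < dim_col (1\<^sub>m 2 - apply_channel Ks (ket_proj 0))"
    then have ij: "i < 2" "j < 2" using M[of 0] by auto
    from arg_cong[OF sum, of "\<lambda>A. A $$ (i, j)"]
    show "apply_channel Ks (ket_proj 1) $$ (i, j) = (1\<^sub>m 2 - apply_channel Ks (ket_proj 0)) $$ (i, j)"
      using ij M[of 0] M[of 1] by (simp add: algebra_simps)
  qed (use M[of 0] M[of 1] in auto)
qed

section \<open>Pauli matrices and the Stokes parameterisation\<close>

lemma pauli_carrier [simp]: "pauli a \<in> carrier_mat 2 2"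
  by (rule carrier_matI) (simp_all add: pauli_def mat_of_rows_list_def)

text \<open>Entry lemmas about Pauli matrices are phrased for a variable index \<open>a\<close>:
  in this context the simplifier rewrites \<open>1 :: nat\<close> to \<open>Suc 0\<close> (\<open>One_nat_def\<close>),
  so a rule about \<open>pauli 1\<close> would no longer match after simplification.\<close>

lemma pauli_index:
  assumes "i < 2" "j < 2"
  shows "pauli a $$ (i, j) =
    (if a = 0 then (if i \<noteq> j then 0 else if i = 0 then 1 else -1)
     else if a = 1 then (if i = j then 0 else 1)
     else (if i = j then 0 else if i = 0 then - \<i> else \<i>))"
  using assms unfolding less_2_cases_iff by (auto simp: pauli_def mat_of_rows_list_def)

lemma mtrace_pauli_mult:
  assumes E: "E \<in> carrier_mat 2 2"
  shows "mtrace (pauli a * E) =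
    (if a = 0 then E $$ (0, 0) - E $$ (1, 1)
     else if a = 1 then E $$ (1, 0) + E $$ (0, 1)
     else - \<i> * E $$ (1, 0) + \<i> * E $$ (0, 1))"
  using E
  by (simp add: mtrace_2 index_mult_mat_2[OF pauli_carrier E] pauli_index del: index_mult_mat)

lemma unital_apply_channel_one:
  assumes qc: "qubit_channel Ks" and un: "unital Ks"
  shows "apply_channel Ks (1\<^sub>m 2) = 1\<^sub>m 2"
proof -
  have Ks: "\<forall>K\<in>set Ks. K \<in> carrier_mat 2 2" by (rule qubit_channel_carrier[OF qc])
  define E where "E = apply_channel Ks (1\<^sub>m 2)"
  define M where "M x = apply_channel Ks (ket_proj x)" for x
  have E: "E \<in> carrier_mat 2 2" unfolding E_def by (rule apply_channel_carrier[OF Ks one_carrier_mat])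
  have "E = M 0 + M 1"
    unfolding E_def M_def ket_proj_sum[symmetric] by (rule apply_channel_add[OF Ks]) auto
  moreover have "M x \<in> carrier_mat 2 2" for x
    unfolding M_def by (rule apply_channel_carrier[OF Ks ket_proj_carrier])
  ultimately have E_index: "E $$ (i, j) = M 0 $$ (i, j) + M 1 $$ (i, j)" if "i < 2" "j < 2" for i j
    using that by (simp add: carrier_matD[OF \<open>M _ \<in> carrier_mat 2 2\<close>])
  have M: "qubit_state (M x)" if "x < 2" for x
    unfolding M_def using qubit_state_apply_channel_ket_proj[OF qc that] .
  have herm: "E $$ (1, 0) = cnj (E $$ (0, 1))"
    using M[of 0] M[of 1] by (simp add: E_index qubit_state_def)
  have tr: "E $$ (0, 0) + E $$ (1, 1) = 2"
    using M[of 0] M[of 1] by (simp add: E_index qubit_state_def algebra_simps)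
  have real: "Im (E $$ (0, 0)) = 0" "Im (E $$ (1, 1)) = 0"
    using M[of 0] M[of 1] by (simp_all add: E_index qubit_state_def)
  have "Re (mtrace (pauli a * E)) = 0" if "a < 3" for a
    using un that unfolding unital_def stokes_t_def E_def by (auto dest!: arg_cong[where f = "\<lambda>v. v $ a"])
  from this[of 0] this[of 1] this[of 2]
  have "Re (E $$ (0, 0)) = Re (E $$ (1, 1))" "E $$ (0, 1) = 0"
    using herm unfolding mtrace_pauli_mult[OF E] by (simp_all add: complex_eq_iff)
  with herm tr real have "E $$ (0, 0) = 1" "E $$ (1, 1) = 1" "E $$ (0, 1) = 0" "E $$ (1, 0) = 0"
    by (simp_all add: complex_eq_iff)
  then show ?thesis
    unfolding E_def[symmetric]
    by (intro eq_matI) (use E in \<open>auto simp: less_2_cases_iff\<close>)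
qed

lemma qubit_state_bloch:
  assumes "qubit_state M"
  defines "r \<equiv> \<lambda>c. Re (mtrace (pauli c * M))"
  shows "M $$ (0, 0) = (1 + of_real (r 0)) / 2" and "M $$ (1, 1) = (1 - of_real (r 0)) / 2"
    and "M $$ (0, 1) = (of_real (r 1) - \<i> * of_real (r 2)) / 2"
    and "M $$ (1, 0) = (of_real (r 1) + \<i> * of_real (r 2)) / 2"
proof -
  have M: "M \<in> carrier_mat 2 2" using assms unfolding qubit_state_def by simp
  show M00: "M $$ (0, 0) = (1 + of_real (r 0)) / 2"
    and M01: "M $$ (0, 1) = (of_real (r 1) - \<i> * of_real (r 2)) / 2"
    using assms unfolding qubit_state_def r_def mtrace_pauli_mult[OF M] by (auto simp: complex_eq_iff)
  have "M $$ (1, 1) = 1 - M $$ (0, 0)" and "M $$ (1, 0) = cnj (M $$ (0, 1))"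
    using assms unfolding qubit_state_def by (auto simp: algebra_simps)
  then show "M $$ (1, 1) = (1 - of_real (r 0)) / 2"
    and "M $$ (1, 0) = (of_real (r 1) + \<i> * of_real (r 2)) / 2"
    unfolding M00 M01 by (simp_all add: field_simps)
qed

text \<open>For unital \<open>\<E>\<close>, \<open>\<E>(\<sigma>\<^sub>z) = 2 \<E>(|0\<rangle>\<langle>0|) - I\<close>, so the first column of \<open>R\<close> is
  the Bloch vector of \<open>\<E>(|0\<rangle>\<langle>0|)\<close>.\<close>

lemma stokes_R_first_column:
  assumes qc: "qubit_channel Ks" and EI: "apply_channel Ks (1\<^sub>m 2) = 1\<^sub>m 2" and c: "c < 3"
  shows "stokes_R Ks $$ (c, 0) = Re (mtrace (pauli c * apply_channel Ks (ket_proj 0)))"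
proof -
  have Ks: "\<forall>K\<in>set Ks. K \<in> carrier_mat 2 2" by (rule qubit_channel_carrier[OF qc])
  define M where "M = apply_channel Ks (ket_proj 0)"
  define Z where "Z = apply_channel Ks (pauli 0)"
  have M: "M \<in> carrier_mat 2 2" and Z: "Z \<in> carrier_mat 2 2"
    unfolding M_def Z_def by (auto intro: apply_channel_carrier[OF Ks])
  have "pauli 0 + ket_proj 1 = ket_proj 0"
    by (rule eq_matI) (auto simp: pauli_index ket_proj_def less_2_cases_iff)
  then have "Z + (1\<^sub>m 2 - M) = M"
    using apply_channel_add[OF Ks pauli_carrier[of 0] ket_proj_carrier[of 1]]
    unfolding apply_channel_ket_proj_one[OF qc EI] by (simp add: M_def Z_def)
  then have Z_index: "Z $$ (i, j) = 2 * M $$ (i, j) - 1\<^sub>m 2 $$ (i, j)" if "i < 2" "j < 2" for i j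
    using that M Z by (auto dest!: arg_cong[where f = "\<lambda>A. A $$ (i, j)"] simp: eq_diff_eq)
  have "stokes_R Ks $$ (c, 0) = Re (mtrace (pauli c * Z)) / 2"
    using c unfolding stokes_R_def Z_def by simp
  also have "\<dots> = Re (mtrace (pauli c * M))"
    using c Z_index unfolding less_3_cases_iff
    by (auto simp: mtrace_pauli_mult[OF Z] mtrace_pauli_mult[OF M])
  finally show ?thesis unfolding M_def .
qed

lemma sandwich_hermitian_2:
  assumes U: "U \<in> carrier_mat 2 2" and \<rho>: "\<rho> \<in> carrier_mat 2 2"
    and "\<rho> $$ (1, 0) = cnj (\<rho> $$ (0, 1))" "cnj (\<rho> $$ (0, 0)) = \<rho> $$ (0, 0)" "cnj (\<rho> $$ (1, 1)) = \<rho> $$ (1, 1)"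
  shows "(U * \<rho> * mat_adjoint U) $$ (1, 0) = cnj ((U * \<rho> * mat_adjoint U) $$ (0, 1))"
proof -
  have "(U * \<rho> * mat_adjoint U) $$ (1, 0) =
    (U $$ (1, 0) * \<rho> $$ (0, 0) + U $$ (1, 1) * \<rho> $$ (1, 0)) * cnj (U $$ (0, 0)) +
    (U $$ (1, 0) * \<rho> $$ (0, 1) + U $$ (1, 1) * \<rho> $$ (1, 1)) * cnj (U $$ (0, 1))"
    and "(U * \<rho> * mat_adjoint U) $$ (0, 1) =
    (U $$ (0, 0) * \<rho> $$ (0, 0) + U $$ (0, 1) * \<rho> $$ (1, 0)) * cnj (U $$ (1, 0)) +
    (U $$ (0, 0) * \<rho> $$ (0, 1) + U $$ (0, 1) * \<rho> $$ (1, 1)) * cnj (U $$ (1, 1))"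
    by (rule sandwich_index_2[OF U \<rho> U]; simp)+
  then show ?thesis using assms(3-5) by (simp add: algebra_simps)
qed

lemma apply_channel_single:
  "U \<in> carrier_mat 2 2 \<Longrightarrow> \<rho> \<in> carrier_mat 2 2 \<Longrightarrow> apply_channel [U] \<rho> = U * \<rho> * mat_adjoint U"
  by (simp add: apply_channel_def)

lemma sandwich_pauli_offdiag:
  assumes U: "U \<in> carrier_mat 2 2" and c: "c < 3"
  shows "(U * pauli c * mat_adjoint U) $$ (0, 1) =
    of_real (stokes_R [U] $$ (1, c)) - \<i> * of_real (stokes_R [U] $$ (2, c))"
proof -
  define H where "H = U * pauli c * mat_adjoint U"
  have H: "H \<in> carrier_mat 2 2" unfolding H_def using U by simp
  have herm: "H $$ (1, 0) = cnj (H $$ (0, 1))"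
    unfolding H_def using c unfolding less_3_cases_iff
    by (intro sandwich_hermitian_2[OF U pauli_carrier]) (auto simp: pauli_index)
  have stokes: "stokes_R [U] $$ (b, c) = Re (mtrace (pauli b * H)) / 2" if "b < 3" for b
    unfolding stokes_R_def H_def using that c by (simp add: apply_channel_single[OF U])
  show ?thesis
    using herm stokes[of 1] stokes[of 2] unfolding H_def[symmetric]
    by (simp add: mtrace_pauli_mult[OF H] complex_eq_iff)
qed

lemma unitary2_carrier: "unitary2 U \<Longrightarrow> U \<in> carrier_mat 2 2"
  unfolding unitary2_def by simp

lemma unitary2_right: "unitary2 U \<Longrightarrow> U * mat_adjoint U = 1\<^sub>m 2"
  unfolding unitary2_def by simp

lemma unitary2_left: "unitary2 U \<Longrightarrow> mat_adjoint U * U = 1\<^sub>m 2"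
  unfolding unitary2_def by (intro mat_mult_left_right_inverse[of U 2]) auto

lemma unitary2_cancel_left:
  "unitary2 U \<Longrightarrow> X \<in> carrier_mat 2 2 \<Longrightarrow> mat_adjoint U * (U * X) = X"
  by (simp add: assoc_mult_mat[symmetric, of _ 2 2 _ 2] unitary2_carrier unitary2_left)

lemma unitary2_cancel_right:
  "unitary2 U \<Longrightarrow> X \<in> carrier_mat 2 2 \<Longrightarrow> U * (mat_adjoint U * X) = X"
  by (simp add: assoc_mult_mat[symmetric, of _ 2 2 _ 2] unitary2_carrier unitary2_right)

lemma unitary2_rows_orthogonal:
  assumes U: "unitary2 U"
  shows "U $$ (0, 0) * cnj (U $$ (1, 0)) + U $$ (0, 1) * cnj (U $$ (1, 1)) = 0"
proof -
  have Uc: "U \<in> carrier_mat 2 2" by (rule unitary2_carrier[OF U])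
  have "(U * mat_adjoint U) $$ (0, 1) = 0" using unitary2_right[OF U] by simp
  then show ?thesis
    by (simp add: index_mult_mat_2[OF Uc mat_adjoint_carrier[OF Uc]] carrier_matD[OF Uc] del: index_mult_mat)
qed

lemma mtrace_unitary_sandwich:
  assumes U: "unitary2 U" and X: "X \<in> carrier_mat 2 2"
  shows "mtrace (U * X * mat_adjoint U) = mtrace X"
proof -
  have "mtrace (U * X * mat_adjoint U) = mtrace (mat_adjoint U * (U * X))"
    using U X by (intro mtrace_mult_comm_2) (auto simp: unitary2_carrier)
  then show ?thesis using U X by (simp add: unitary2_cancel_left)
qed

lemma unitary2_one: "unitary2 (1\<^sub>m 2)"
  unfolding unitary2_def by simp

lemma apply_channel_map_sandwich:
  assumes Ks: "\<forall>K\<in>set Ks. K \<in> carrier_mat 2 2" and U: "U \<in> carrier_mat 2 2" and V: "V \<in> carrier_mat 2 2"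
    and \<rho>: "\<rho> \<in> carrier_mat 2 2"
  shows "apply_channel (map (\<lambda>K. U * K * V) Ks) \<rho> = U * apply_channel Ks (V * \<rho> * mat_adjoint V) * mat_adjoint U"
proof -
  have "(U * K * V) * \<rho> * mat_adjoint (U * K * V) =
      U * (K * (V * \<rho> * mat_adjoint V) * mat_adjoint K) * mat_adjoint U"
    if K: "K \<in> carrier_mat 2 2" for K
  proof -
    have "mat_adjoint (U * K * V) = mat_adjoint V * mat_adjoint K * mat_adjoint U"
      using U K V by (simp add: mat_adjoint_mult[of _ 2 2 _ 2] assoc_mult_mat[of _ 2 2 _ 2 _ 2])
    then show ?thesis using U K V \<rho> by (simp add: assoc_mult_mat[of _ 2 2 _ 2 _ 2])
  qed
  then have "apply_channel (map (\<lambda>K. U * K * V) Ks) \<rho> =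
      msum2 (\<lambda>K. U * (K * (V * \<rho> * mat_adjoint V) * mat_adjoint K) * mat_adjoint U) Ks"
    unfolding apply_channel_def msum2_map using Ks by (intro msum2_cong) auto
  also have "\<dots> = U * apply_channel Ks (V * \<rho> * mat_adjoint V) * mat_adjoint U"
    unfolding apply_channel_def using Ks U V \<rho> by (intro msum2_mult_left_right) auto
  finally show ?thesis .
qed

lemma qubit_channel_compose_unitaries:
  assumes qc: "qubit_channel Ks" and UA: "unitary2 UA" and UB: "unitary2 UB"
  shows "qubit_channel (compose_unitaries UB Ks UA)"
proof -
  have Ks: "\<forall>K\<in>set Ks. K \<in> carrier_mat 2 2" by (rule qubit_channel_carrier[OF qc])
  have A: "UA \<in> carrier_mat 2 2" and B: "UB \<in> carrier_mat 2 2" using UA UB by (auto simp: unitary2_carrier)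
  have "mat_adjoint (UB * K * UA) * (UB * K * UA) = mat_adjoint UA * (mat_adjoint K * K) * UA"
    if K: "K \<in> carrier_mat 2 2" for K
    using A B K
    by (simp add: mat_adjoint_mult[of _ 2 2 _ 2] assoc_mult_mat[of _ 2 2 _ 2 _ 2] unitary2_cancel_left[OF UB])
  then have "msum2 (\<lambda>K. mat_adjoint K * K) (compose_unitaries UB Ks UA) =
      msum2 (\<lambda>K. mat_adjoint UA * (mat_adjoint K * K) * UA) Ks"
    unfolding compose_unitaries_def msum2_map using Ks by (intro msum2_cong) auto
  also have "\<dots> = mat_adjoint UA * msum2 (\<lambda>K. mat_adjoint K * K) Ks * UA"
    using Ks A by (intro msum2_mult_left_right) auto
  also have "\<dots> = 1\<^sub>m 2"
    using qc unitary2_left[OF UA] A unfolding qubit_channel_def by simp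
  finally show ?thesis
    using Ks A B unfolding qubit_channel_def compose_unitaries_def by auto
qed

lemma apply_channel_compose_unitaries_one:
  assumes qc: "qubit_channel Ks" and UA: "unitary2 UA" and UB: "unitary2 UB"
    and EI: "apply_channel Ks (1\<^sub>m 2) = 1\<^sub>m 2"
  shows "apply_channel (compose_unitaries UB Ks UA) (1\<^sub>m 2) = 1\<^sub>m 2"
proof -
  have one: "U * 1\<^sub>m 2 * mat_adjoint U = 1\<^sub>m 2" if "unitary2 U" for U
    using unitary2_carrier[OF that] unitary2_right[OF that] by simp
  show ?thesis
    using apply_channel_map_sandwich[OF qubit_channel_carrier[OF qc] unitary2_carrier[OF UB]
        unitary2_carrier[OF UA] one_carrier_mat]
    by (simp add: compose_unitaries_def one[OF UA] EI one[OF UB])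
qed

lemma post_unitary_eq_compose_unitaries:
  assumes "qubit_channel Ks"
  shows "post_unitary UB Ks = compose_unitaries UB Ks (1\<^sub>m 2)"
  unfolding post_unitary_def compose_unitaries_def
proof (intro map_cong refl)
  fix K assume "K \<in> set Ks"
  then have "dim_col K = 2" using qubit_channel_carrier[OF assms] by auto
  then show "UB * K = UB * K * 1\<^sub>m 2" by (simp add: right_mult_one_mat')
qed

lemma mtrace_sandwich_ket_proj:
  assumes K: "K \<in> carrier_mat 2 2" and L: "L \<in> carrier_mat 2 2" and x: "x < 2"
  shows "mtrace (K * ket_proj x * mat_adjoint L) = K $$ (0, x) * cnj (L $$ (0, x)) + K $$ (1, x) * cnj (L $$ (1, x))"
proof -
  have "mtrace (K * ket_proj x * mat_adjoint L) =
      (K * ket_proj x * mat_adjoint L) $$ (0, 0) + (K * ket_proj x * mat_adjoint L) $$ (1, 1)"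
    using K L by (intro mtrace_2) simp
  also have "\<dots> = K $$ (0, x) * cnj (L $$ (0, x)) + K $$ (1, x) * cnj (L $$ (1, x))"
    using sandwich_index_2[OF K ket_proj_carrier L, of 0 0] sandwich_index_2[OF K ket_proj_carrier L, of 1 1] x
    by (auto simp: ket_proj_def less_2_cases_iff)
  finally show ?thesis .
qed

lemma rho_E_eq_gram:
  assumes Ks: "\<forall>K\<in>set Ks. K \<in> carrier_mat 2 2"
  shows "rho_E Ks = mat (length Ks) (length Ks) (\<lambda>(i, j). mtrace (Ks!i * mat_adjoint (Ks!j)) / 2)"
proof (rule eq_matI)
  fix i j assume "i < dim_row (mat (length Ks) (length Ks) (\<lambda>(i, j). mtrace (Ks!i * mat_adjoint (Ks!j)) / 2))"
    and "j < dim_col (mat (length Ks) (length Ks) (\<lambda>(i, j). mtrace (Ks!i * mat_adjoint (Ks!j)) / 2))"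
  then have ij: "i < length Ks" "j < length Ks" by auto
  then have Ki: "Ks!i \<in> carrier_mat 2 2" and Kj: "Ks!j \<in> carrier_mat 2 2" using Ks by auto
  have "mtrace (Ks!i * mat_adjoint (Ks!j)) =
      Ks!i $$ (0, 0) * cnj (Ks!j $$ (0, 0)) + Ks!i $$ (1, 0) * cnj (Ks!j $$ (1, 0)) +
      (Ks!i $$ (0, 1) * cnj (Ks!j $$ (0, 1)) + Ks!i $$ (1, 1) * cnj (Ks!j $$ (1, 1)))"
    using Ki Kj by (simp add: mtrace_2 index_mult_mat_2 carrier_matD[OF Kj] del: index_mult_mat)
  then have "mtrace (Ks!i * ket_proj 0 * mat_adjoint (Ks!j)) + mtrace (Ks!i * ket_proj 1 * mat_adjoint (Ks!j))
      = mtrace (Ks!i * mat_adjoint (Ks!j))"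
    by (simp only: mtrace_sandwich_ket_proj[OF Ki Kj] zero_less_numeral one_less_numeral_iff semiring_norm(76))
  then show "rho_E Ks $$ (i, j) = mat (length Ks) (length Ks) (\<lambda>(i, j). mtrace (Ks!i * mat_adjoint (Ks!j)) / 2) $$ (i, j)"
    using ij by (simp add: rho_E_def compl_channel_def add_divide_distrib[symmetric])
qed (simp_all add: rho_E_def compl_channel_def)

lemma rho_E_compose_unitaries:
  assumes qc: "qubit_channel Ks" and UA: "unitary2 UA" and UB: "unitary2 UB"
  shows "rho_E (compose_unitaries UB Ks UA) = rho_E Ks"
proof -
  have Ks: "\<forall>K\<in>set Ks. K \<in> carrier_mat 2 2" by (rule qubit_channel_carrier[OF qc])
  have A: "UA \<in> carrier_mat 2 2" and B: "UB \<in> carrier_mat 2 2" using UA UB by (auto simp: unitary2_carrier)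
  have inv: "mtrace ((UB * K * UA) * mat_adjoint (UB * L * UA)) = mtrace (K * mat_adjoint L)"
    if K: "K \<in> carrier_mat 2 2" and L: "L \<in> carrier_mat 2 2" for K L
  proof -
    have "(UB * K * UA) * mat_adjoint (UB * L * UA) = UB * (K * mat_adjoint L) * mat_adjoint UB"
      using A B K L
      by (simp add: mat_adjoint_mult[of _ 2 2 _ 2] assoc_mult_mat[of _ 2 2 _ 2 _ 2] unitary2_cancel_right[OF UA])
    then show ?thesis using K L by (simp add: mtrace_unitary_sandwich[OF UB])
  qed
  show ?thesis
    using Ks unfolding rho_E_eq_gram[OF Ks]
      rho_E_eq_gram[OF qubit_channel_carrier[OF qubit_channel_compose_unitaries[OF qc UA UB]]]
    by (intro eq_matI) (auto simp: compose_unitaries_def intro!: inv)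
qed

section \<open>The optimal post-processing unitary\<close>

lemma rotation3_row_orthogonal_to_first:
  assumes rot: "rotation3 Q" and aligned: "\<forall>j<3. Q $$ (0, j) = c * r j" and i: "i = 1 \<or> i = 2"
  shows "Q $$ (i, 0) * r 0 + Q $$ (i, 1) * r 1 + Q $$ (i, 2) * r 2 = 0"
proof -
  have Q: "Q \<in> carrier_mat 3 3" and QQ: "Q * transpose_mat Q = 1\<^sub>m 3"
    using rot unfolding rotation3_def by auto
  have rows: "Q $$ (k, 0) * Q $$ (0, 0) + Q $$ (k, 1) * Q $$ (0, 1) + Q $$ (k, 2) * Q $$ (0, 2)
      = (if k = 0 then 1 else 0)" if "k < 3" for k
  proof -
    have "(Q * transpose_mat Q) $$ (k, 0) = (\<Sum>j<3. Q $$ (k, j) * Q $$ (0, j))"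
      using Q that by (simp add: scalar_prod_def atLeast0LessThan)
    then show ?thesis using QQ that by (simp add: sum_lessThan_3)
  qed
  have "c * c * (r 0 * r 0 + r 1 * r 1 + r 2 * r 2) = 1"
    using rows[of 0] aligned by (simp add: algebra_simps)
  then have "c \<noteq> 0" by auto
  moreover have "c * (Q $$ (i, 0) * r 0 + Q $$ (i, 1) * r 1 + Q $$ (i, 2) * r 2) = 0"
    using rows[of i] aligned i by (auto simp: algebra_simps)
  ultimately show ?thesis by simp
qed

lemma sandwich_qubit_state_offdiag:
  assumes U: "unitary2 U" and M: "qubit_state M"
  defines "Q \<equiv> stokes_R [U]" and "r \<equiv> \<lambda>c. Re (mtrace (pauli c * M))"
  shows "(U * M * mat_adjoint U) $$ (0, 1) =
    (of_real (Q $$ (1, 0) * r 0 + Q $$ (1, 1) * r 1 + Q $$ (1, 2) * r 2)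
      - \<i> * of_real (Q $$ (2, 0) * r 0 + Q $$ (2, 1) * r 1 + Q $$ (2, 2) * r 2)) / 2"
proof -
  have Uc: "U \<in> carrier_mat 2 2" by (rule unitary2_carrier[OF U])
  have Mc: "M \<in> carrier_mat 2 2" using M unfolding qubit_state_def by simp
  define u where "u i j = U $$ (i, j)" for i j
  have unit: "u 0 0 * cnj (u 1 0) + u 0 1 * cnj (u 1 1) = 0"
    unfolding u_def by (rule unitary2_rows_orthogonal[OF U])
  have sandwich: "(U * X * mat_adjoint U) $$ (0, 1) =
      (u 0 0 * X $$ (0, 0) + u 0 1 * X $$ (1, 0)) * cnj (u 1 0) +
      (u 0 0 * X $$ (0, 1) + u 0 1 * X $$ (1, 1)) * cnj (u 1 1)" if "X \<in> carrier_mat 2 2" for X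
    unfolding u_def by (rule sandwich_index_2[OF Uc that Uc]) simp_all
  have offdiag: "(U * pauli 0 * mat_adjoint U) $$ (0, 1) = of_real (Q $$ (1, 0)) - \<i> * of_real (Q $$ (2, 0))"
    "(U * pauli 1 * mat_adjoint U) $$ (0, 1) = of_real (Q $$ (1, 1)) - \<i> * of_real (Q $$ (2, 1))"
    "(U * pauli 2 * mat_adjoint U) $$ (0, 1) = of_real (Q $$ (1, 2)) - \<i> * of_real (Q $$ (2, 2))"
    unfolding Q_def by (rule sandwich_pauli_offdiag[OF Uc]; simp)+
  have h: "(U * pauli 0 * mat_adjoint U) $$ (0, 1) = u 0 0 * cnj (u 1 0) - u 0 1 * cnj (u 1 1)"
    "(U * pauli 1 * mat_adjoint U) $$ (0, 1) = u 0 1 * cnj (u 1 0) + u 0 0 * cnj (u 1 1)"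
    "(U * pauli 2 * mat_adjoint U) $$ (0, 1) = \<i> * u 0 1 * cnj (u 1 0) - \<i> * u 0 0 * cnj (u 1 1)"
    by (simp_all add: sandwich[OF pauli_carrier] pauli_index del: One_nat_def)
  \<comment> \<open>the Bloch decomposition \<open>M = (I + \<Sum>\<^sub>c r\<^sub>c \<sigma>\<^sub>c)/2\<close>, conjugated by \<open>U\<close>\<close>
  have "(U * M * mat_adjoint U) $$ (0, 1) =
      (u 0 0 * cnj (u 1 0) + u 0 1 * cnj (u 1 1)) / 2 +
      (of_real (r 0) * (U * pauli 0 * mat_adjoint U) $$ (0, 1) +
       of_real (r 1) * (U * pauli 1 * mat_adjoint U) $$ (0, 1) +
       of_real (r 2) * (U * pauli 2 * mat_adjoint U) $$ (0, 1)) / 2"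
    unfolding sandwich[OF Mc] qubit_state_bloch[OF M] h r_def by (simp add: field_simps)
  also have "\<dots> = (of_real (Q $$ (1, 0) * r 0 + Q $$ (1, 1) * r 1 + Q $$ (1, 2) * r 2)
      - \<i> * of_real (Q $$ (2, 0) * r 0 + Q $$ (2, 1) * r 1 + Q $$ (2, 2) * r 2)) / 2"
    unfolding unit offdiag by (simp add: algebra_simps)
  finally show ?thesis .
qed

text \<open>Rows \<open>1\<close> and \<open>2\<close> of the rotation are orthogonal to its first row, hence to the
  Bloch vector of \<open>\<E>(|0\<rangle>\<langle>0|)\<close>; so the rotated Bloch vector points along \<open>z\<close>.\<close>

lemma unitary_aligned_diagonalises_output:
  assumes qc: "qubit_channel Ks" and EI: "apply_channel Ks (1\<^sub>m 2) = 1\<^sub>m 2" and U: "unitary2 U"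
    and rot: "rotation3 (stokes_R [U])"
    and aligned: "\<exists>c. \<forall>j<3. stokes_R [U] $$ (0, j) = c * stokes_R Ks $$ (j, 0)"
  shows "(U * apply_channel Ks (ket_proj 0) * mat_adjoint U) $$ (0, 1) = 0"
proof -
  define M where "M = apply_channel Ks (ket_proj 0)"
  define r where "r c = Re (mtrace (pauli c * M))" for c
  have state: "qubit_state M" unfolding M_def by (rule qubit_state_apply_channel_ket_proj[OF qc]) simp
  obtain c where "\<forall>j<3. stokes_R [U] $$ (0, j) = c * r j"
    using aligned stokes_R_first_column[OF qc EI] unfolding r_def M_def by auto
  then have "stokes_R [U] $$ (i, 0) * r 0 + stokes_R [U] $$ (i, 1) * r 1 + stokes_R [U] $$ (i, 2) * r 2 = 0"
    if "i = 1 \<or> i = 2" for i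
    using rotation3_row_orthogonal_to_first[OF rot _ that] by blast
  then show ?thesis
    unfolding M_def[symmetric] sandwich_qubit_state_offdiag[OF U state] r_def[symmetric] by simp
qed

section \<open>The key rate of a unital channel\<close>

lemma H_XY_unital:
  assumes qc: "qubit_channel Ks" and EI: "apply_channel Ks (1\<^sub>m 2) = 1\<^sub>m 2"
  shows "H_XY Ks = binary_entropy (Re (apply_channel Ks (ket_proj 0) $$ (0, 0)))"
proof -
  define M where "M = apply_channel Ks (ket_proj 0)"
  define a where "a = Re (M $$ (0, 0))"
  have M: "M \<in> carrier_mat 2 2" and state: "qubit_state M"
    unfolding M_def by (auto intro: qubit_state_apply_channel_ket_proj[OF qc]
        apply_channel_carrier[OF qubit_channel_carrier[OF qc]])
  have b: "Re (M $$ (1, 1)) = 1 - a" unfolding a_def by (rule qubit_state_det_bounds(1)[OF state])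
  have M1: "apply_channel Ks (ket_proj 1) = 1\<^sub>m 2 - M"
    unfolding M_def by (rule apply_channel_ket_proj_one[OF qc EI])
  have P: "P_XY Ks 0 0 = a / 2" "P_XY Ks 0 1 = (1 - a) / 2" "P_XY Ks 1 0 = (1 - a) / 2" "P_XY Ks 1 1 = a / 2"
    unfolding P_XY_def M1 M_def[symmetric] using M b by (simp_all add: a_def carrier_matD[OF M])
  have entropy_term: "(if p / 2 \<le> 0 then 0 else - (p / 2) * log 2 ((p / 2) / (1 / 2))) = eta p / 2" for p :: real
    unfolding eta_def by auto
  have "a / 2 + (1 - a) / 2 = (1 / 2 :: real)" "(1 - a) / 2 + a / 2 = (1 / 2 :: real)"
    by (simp_all add: field_simps)
  then have "H_XY Ks = eta a / 2 + eta (1 - a) / 2 + (eta (1 - a) / 2 + eta a / 2)"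
    unfolding H_XY_def sum_lessThan_2 Let_def P by (simp only: entropy_term)
  then show ?thesis unfolding M_def[symmetric] a_def[symmetric] binary_entropy_def by simp
qed

lemma vn_entropy_half_transpose_qubit_state:
  assumes state: "qubit_state M"
  defines "d \<equiv> Re (M $$ (0, 0)) * Re (M $$ (1, 1)) - (cmod (M $$ (0, 1)))\<^sup>2"
  shows "vn_entropy ((1/2) \<cdot>\<^sub>m transpose_mat M) =
    eta ((1 + sqrt (1 - 4 * d)) / 4) + eta ((1 - sqrt (1 - 4 * d)) / 4)"
proof -
  define B where "B = (1/2) \<cdot>\<^sub>m transpose_mat M"
  have Mc: "M \<in> carrier_mat 2 2" using state unfolding qubit_state_def by simp
  then have B: "B \<in> carrier_mat 2 2" unfolding B_def by simp
  have e: "B $$ (0, 0) = M $$ (0, 0) / 2" "B $$ (1, 1) = M $$ (1, 1) / 2"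
    "B $$ (0, 1) = M $$ (1, 0) / 2" "B $$ (1, 0) = M $$ (0, 1) / 2"
    using Mc by (simp_all add: B_def carrier_matD[OF Mc])
  define a b m where "a = Re (M $$ (0, 0))" and "b = Re (M $$ (1, 1))" and "m = M $$ (0, 1)"
  have M: "M $$ (0, 0) = of_real a" "M $$ (1, 1) = of_real b" "M $$ (1, 0) = cnj m"
    using state unfolding qubit_state_def a_def b_def m_def by (simp_all add: complex_eq_iff)
  have ab: "a + b = 1" using state unfolding qubit_state_def a_def b_def by (auto dest: arg_cong[where f = Re])
  define s where "s = sqrt (1 - 4 * d)"
  have "d \<le> 1/4" unfolding d_def by (rule qubit_state_det_bounds(4)[OF state])
  then have s2: "s\<^sup>2 = 1 - 4 * d" unfolding s_def by simp
  have "(1 + s) / 4 + (1 - s) / 4 = (a + b) / 2" using ab by (simp add: field_simps)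
  then have tr: "B $$ (0, 0) + B $$ (1, 1) = of_real ((1 + s) / 4 + (1 - s) / 4)"
    unfolding e M by (simp add: add_divide_distrib)
  have prod: "(1 + s) / 4 * ((1 - s) / 4) = (a * b - (cmod m)\<^sup>2) / 4"
    using s2 unfolding d_def a_def[symmetric] b_def[symmetric] m_def[symmetric]
    by (simp add: field_simps power2_eq_square)
  have det: "B $$ (0, 0) * B $$ (1, 1) - B $$ (0, 1) * B $$ (1, 0) = of_real ((1 + s) / 4 * ((1 - s) / 4))"
    unfolding e M prod m_def[symmetric] cmod_power2 by (simp add: complex_eq_iff power2_eq_square field_simps)
  show ?thesis unfolding B_def[symmetric] s_def[symmetric] by (rule vn_entropy_2[OF B tr det])
qed

text \<open>\<open>\<E>\<^sub>E(|x\<rangle>\<langle>x|)/2 = Z W\<close> with \<open>Z\<close> the \<open>n \<times> 2\<close> matrix of \<open>x\<close>-th Kraus columns (halved) and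
  \<open>W\<close> its conjugate transpose (doubled); \<open>W Z\<close> is the transpose of \<open>\<E>(|x\<rangle>\<langle>x|)/2\<close>.\<close>

lemma vn_entropy_half_compl_channel_ket_proj:
  assumes qc: "qubit_channel Ks" and x: "x < 2"
  defines "M \<equiv> apply_channel Ks (ket_proj x)"
  defines "d \<equiv> Re (M $$ (0, 0)) * Re (M $$ (1, 1)) - (cmod (M $$ (0, 1)))\<^sup>2"
  shows "vn_entropy ((1/2) \<cdot>\<^sub>m compl_channel Ks (ket_proj x)) =
    eta ((1 + sqrt (1 - 4 * d)) / 4) + eta ((1 - sqrt (1 - 4 * d)) / 4)"
proof -
  have Ks: "\<forall>K\<in>set Ks. K \<in> carrier_mat 2 2" by (rule qubit_channel_carrier[OF qc])
  have state: "qubit_state M" unfolding M_def by (rule qubit_state_apply_channel_ket_proj[OF qc x])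
  then have Mc: "M \<in> carrier_mat 2 2" unfolding qubit_state_def by simp
  define n where "n = length Ks"
  define k where "k i r = Ks!i $$ (r, x)" for i r
  define Z where "Z = mat n 2 (\<lambda>(i, r). k i r / 2)"
  define W where "W = mat 2 n (\<lambda>(r, j). cnj (k j r))"
  have Z: "Z \<in> carrier_mat n 2" and W: "W \<in> carrier_mat 2 n"
    unfolding Z_def W_def by auto
  have "(1/2) \<cdot>\<^sub>m compl_channel Ks (ket_proj x) = Z * W"
    unfolding compl_channel_def n_def[symmetric]
    by (rule eq_matI) (use Ks x in \<open>auto simp: Z_def W_def k_def n_def scalar_prod_def
        numeral_2_eq_2 mtrace_sandwich_ket_proj field_simps\<close>)
  moreover have "W * Z = (1/2) \<cdot>\<^sub>m transpose_mat M"
  proof (rule eq_matI)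
    fix r t assume "r < dim_row ((1/2) \<cdot>\<^sub>m transpose_mat M)" "t < dim_col ((1/2) \<cdot>\<^sub>m transpose_mat M)"
    then have rt: "r < 2" "t < 2" using Mc by auto
    show "(W * Z) $$ (r, t) = ((1/2) \<cdot>\<^sub>m transpose_mat M) $$ (r, t)"
      using rt apply_channel_ket_proj_index[OF Ks x rt(2,1), folded M_def]
      by (simp add: W_def Z_def k_def n_def scalar_prod_def atLeast0LessThan sum_divide_distrib
          carrier_matD[OF Mc] ac_simps)
  qed (use Mc in \<open>auto simp: W_def Z_def\<close>)
  ultimately show ?thesis
    using vn_entropy_mult_comm[OF Z W] vn_entropy_half_transpose_qubit_state[OF state]
    unfolding d_def by simp
qed

lemma vn_entropy_rho_XE:
  assumes qc: "qubit_channel Ks" and EI: "apply_channel Ks (1\<^sub>m 2) = 1\<^sub>m 2"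
  defines "M \<equiv> apply_channel Ks (ket_proj 0)"
  defines "d \<equiv> Re (M $$ (0, 0)) * Re (M $$ (1, 1)) - (cmod (M $$ (0, 1)))\<^sup>2"
  shows "vn_entropy (rho_XE Ks) = 1 + binary_entropy ((1 + sqrt (1 - 4 * d)) / 2)"
proof -
  have M: "M \<in> carrier_mat 2 2" and state: "qubit_state M"
    unfolding M_def by (auto intro: qubit_state_apply_channel_ket_proj[OF qc]
        apply_channel_carrier[OF qubit_channel_carrier[OF qc]])
  have M1: "apply_channel Ks (ket_proj 1) = 1\<^sub>m 2 - M"
    unfolding M_def by (rule apply_channel_ket_proj_one[OF qc EI])
  have "Re (apply_channel Ks (ket_proj 1) $$ (0, 0)) * Re (apply_channel Ks (ket_proj 1) $$ (1, 1))
      - (cmod (apply_channel Ks (ket_proj 1) $$ (0, 1)))\<^sup>2 = d"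
    unfolding M1 using M qubit_state_det_bounds(1)[OF state] unfolding d_def by (simp add: carrier_matD[OF M])
  then have half: "vn_entropy ((1/2) \<cdot>\<^sub>m compl_channel Ks (ket_proj x)) =
      eta ((1 + sqrt (1 - 4 * d)) / 4) + eta ((1 - sqrt (1 - 4 * d)) / 4)" if "x = 0 \<or> x = 1" for x
    using that vn_entropy_half_compl_channel_ket_proj[OF qc, of 0] vn_entropy_half_compl_channel_ket_proj[OF qc, of 1]
    unfolding d_def M_def by auto
  have "0 \<le> d" "d \<le> 1/4" unfolding d_def using qubit_state_det_bounds(2,4)[OF state] by auto
  then have s: "0 \<le> sqrt (1 - 4 * d)" "sqrt (1 - 4 * d) \<le> 1" by auto
  have "vn_entropy (rho_XE Ks) = vn_entropy ((1/2) \<cdot>\<^sub>m compl_channel Ks (ket_proj 0)) +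
      vn_entropy ((1/2) \<cdot>\<^sub>m compl_channel Ks (ket_proj 1))"
    unfolding rho_XE_def by (rule vn_entropy_four_block_diag) (auto simp: compl_channel_def)
  also have "\<dots> = 1 + binary_entropy ((1 + sqrt (1 - 4 * d)) / 2)"
    using eta_quarters[OF s] half[of 0] half[of 1] by simp
  finally show ?thesis .
qed

lemma key_rate_unital:
  assumes qc: "qubit_channel Ks" and EI: "apply_channel Ks (1\<^sub>m 2) = 1\<^sub>m 2"
  defines "M \<equiv> apply_channel Ks (ket_proj 0)"
  defines "d \<equiv> Re (M $$ (0, 0)) * Re (M $$ (1, 1)) - (cmod (M $$ (0, 1)))\<^sup>2"
  shows "key_rate Ks = 1 + binary_entropy ((1 + sqrt (1 - 4 * d)) / 2)
    - binary_entropy (Re (M $$ (0, 0))) - vn_entropy (rho_E Ks)"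
  unfolding key_rate_def H_XE_def H_XY_unital[OF qc EI] vn_entropy_rho_XE[OF qc EI] M_def d_def
  by simp

lemma key_rate_compose_unitaries_le:
  assumes qc: "qubit_channel Ks" and EI: "apply_channel Ks (1\<^sub>m 2) = 1\<^sub>m 2"
    and UA: "unitary2 UA" and UB: "unitary2 UB"
  shows "key_rate (compose_unitaries UB Ks UA) \<le> 1 - vn_entropy (rho_E Ks)"
proof -
  let ?K = "compose_unitaries UB Ks UA"
  have qc': "qubit_channel ?K" by (rule qubit_channel_compose_unitaries[OF qc UA UB])
  have EI': "apply_channel ?K (1\<^sub>m 2) = 1\<^sub>m 2" by (rule apply_channel_compose_unitaries_one[OF qc UA UB EI])
  have state: "qubit_state (apply_channel ?K (ket_proj 0))"
    by (rule qubit_state_apply_channel_ket_proj[OF qc']) simp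
  show ?thesis
    unfolding key_rate_unital[OF qc' EI'] rho_E_compose_unitaries[OF qc UA UB]
    using binary_entropy_eigenvalue_le[OF qubit_state_det_bounds(2,3)[OF state]] by simp
qed

lemma key_rate_diagonal_output:
  assumes qc: "qubit_channel Ks" and EI: "apply_channel Ks (1\<^sub>m 2) = 1\<^sub>m 2"
    and diag: "apply_channel Ks (ket_proj 0) $$ (0, 1) = 0"
  shows "key_rate Ks = 1 - vn_entropy (rho_E Ks)"
proof -
  have state: "qubit_state (apply_channel Ks (ket_proj 0))"
    by (rule qubit_state_apply_channel_ket_proj[OF qc]) simp
  show ?thesis
    unfolding key_rate_unital[OF qc EI] diag qubit_state_det_bounds(1)[OF state]
    by (simp add: binary_entropy_eigenvalue_diagonal)
qed

lemma key_rate_post_unitary_aligned: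
  assumes qc: "qubit_channel Ks" and EI: "apply_channel Ks (1\<^sub>m 2) = 1\<^sub>m 2" and U: "unitary2 U"
    and rot: "rotation3 (stokes_R [U])"
    and aligned: "\<exists>c. \<forall>j<3. stokes_R [U] $$ (0, j) = c * stokes_R Ks $$ (j, 0)"
  shows "key_rate (post_unitary U Ks) = 1 - vn_entropy (rho_E Ks)"
proof -
  let ?K = "compose_unitaries U Ks (1\<^sub>m 2)"
  have "apply_channel ?K (ket_proj 0) = U * apply_channel Ks (ket_proj 0) * mat_adjoint U"
    unfolding compose_unitaries_def
    using apply_channel_map_sandwich[OF qubit_channel_carrier[OF qc] unitary2_carrier[OF U] one_carrier_mat
        ket_proj_carrier[of 0]] left_mult_one_mat[OF ket_proj_carrier[of 0]]
      right_mult_one_mat[OF ket_proj_carrier[of 0]]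
    by simp
  then have "apply_channel ?K (ket_proj 0) $$ (0, 1) = 0"
    using unitary_aligned_diagonalises_output[OF qc EI U rot aligned] by simp
  then have "key_rate ?K = 1 - vn_entropy (rho_E ?K)"
    by (intro key_rate_diagonal_output qubit_channel_compose_unitaries apply_channel_compose_unitaries_one
        qc unitary2_one U EI)
  then show ?thesis
    unfolding post_unitary_eq_compose_unitaries[OF qc] rho_E_compose_unitaries[OF qc unitary2_one U] .
qed

theorem corollary1:
  fixes Ks :: "complex mat list" and OB :: "real mat" and UB :: "complex mat"
  assumes "qubit_channel Ks" and "unital Ks"
    and "rotation3 OB"
    and "\<exists>c. \<forall>j<3. OB $$ (0, j) = c * stokes_R Ks $$ (j, 0)"
    and "unitary2 UB" and "stokes_R [UB] = OB"
  shows "F1 Ks = key_rate (post_unitary UB Ks) \<and> key_rate (post_unitary UB Ks) = F2 Ks"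
proof -
  note qc = assms(1) and UB = assms(5)
  have EI: "apply_channel Ks (1\<^sub>m 2) = 1\<^sub>m 2" by (rule unital_apply_channel_one[OF assms(1,2)])
  have opt: "key_rate (post_unitary UB Ks) = 1 - vn_entropy (rho_E Ks)"
    using key_rate_post_unitary_aligned[OF qc EI UB] assms(3,4,6) by simp
  have bound: "key_rate (compose_unitaries U Ks UA) \<le> key_rate (post_unitary UB Ks)"
    if "unitary2 UA" "unitary2 U" for UA U
    unfolding opt by (rule key_rate_compose_unitaries_le[OF qc EI that])
  have "F1 Ks = key_rate (post_unitary UB Ks)"
    unfolding F1_def
    by (rule cSup_eq_maximum)
      (use UB bound[OF unitary2_one] in \<open>auto simp: post_unitary_eq_compose_unitaries[OF qc]\<close>)
  moreover have "F2 Ks = key_rate (post_unitary UB Ks)"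
    unfolding F2_def
    by (rule cSup_eq_maximum)
      (use UB unitary2_one bound in \<open>auto simp: post_unitary_eq_compose_unitaries[OF qc] image_iff\<close>)
  ultimately show ?thesis by simp
qed

end
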